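(* Let $\mathbb{F}_q$ be a finite field of odd characteristic $p$ with $q = p^n$. If $n$ is even, then equilateral triangles of nonzero sidelength exist in the plane $\mathbb{F}_q^2$. If $n$ is odd, they exist if and only if $p \equiv 1, 3$ or $11 \pmod{12}$.
   Context: For $u,v \in \mathbb{F}_q^2$, $\|u-v\| = (u_1-v_1)^2+(u_2-v_2)^2$. An equilateral triangle of sidelength $\ell$ is a triple $(x_1,x_2,x_3)$ of points of $\mathbb{F}_q^2$ with $\|x_1-x_2\| = \|x_2-x_3\| = \|x_3-x_1\| = \ell$. *)

theory Defs
  imports "HOL-Computational_Algebra.Primes"
begin

definition qdist :: "('a::comm_ring_1 \<times> 'a) \<Rightarrow> ('a \<times> 'a) \<Rightarrow> 'a" where
  "qdist u v = (fst u - fst v)^2 + (snd u - snd v)^2"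

definition equilateral_triangle ::
  "('a::comm_ring_1 \<times> 'a) \<Rightarrow> ('a \<times> 'a) \<Rightarrow> ('a \<times> 'a) \<Rightarrow> 'a \<Rightarrow> bool" where
  "equilateral_triangle x1 x2 x3 l \<longleftrightarrow>
     qdist x1 x2 = l \<and> qdist x2 x3 = l \<and> qdist x3 x1 = l"

end

theory Submission
  imports Defs "HOL-Number_Theory.Number_Theory" "HOL-Computational_Algebra.Polynomial"
begin

text \<open>
  If vectors \<open>u, v\<close> span an equilateral triangle of sidelength \<open>l\<close>, then
  \<open>(2 det(u,v))^2 = 4|u|^2|v|^2 - (2 u\<cdot>v)^2 = 3 l^2\<close>; so over a field with \<open>2 \<noteq> 0\<close> a
  triangle with \<open>l \<noteq> 0\<close> exists iff \<open>3\<close> is a square, the converse witness being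
  \<open>(0,0), (1,0), (1/2, s/2)\<close> with \<open>s^2 = 3\<close>. In \<open>\<bbbF>\<^sub>q\<close> with \<open>q = p^n\<close> and \<open>p > 3\<close>, Euler's
  criterion says that \<open>3\<close> is a square iff \<open>3^((q-1)/2) = 1\<close>. Now \<open>(q-1)/2 = (p-1)/2 \<cdot> N\<close>
  with \<open>N = 1 + p + \<dots> + p^(n-1) \<equiv> n (mod 2)\<close>, and \<open>3^((p-1)/2)\<close> is the Legendre symbol
  \<open>(3/p) = \<plusminus>1\<close> read in the prime field, so \<open>3^((q-1)/2) = (3/p)^N\<close>. This is \<open>1\<close> for even
  \<open>n\<close>, and for odd \<open>n\<close> it is \<open>(3/p)\<close>, which by quadratic reciprocity is \<open>1\<close> iff
  \<open>p \<equiv> \<plusminus>1 (mod 12)\<close>. For \<open>p = 3\<close>, \<open>3 = 0\<close> is trivially a square.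
\<close>

lemma cross_product_square_identity:
  fixes a b c d :: "'a::comm_ring_1"
  shows "(2 * (a * d - b * c))^2 =
    4 * (a^2 + b^2) * (c^2 + d^2) - ((a^2 + b^2) + (c^2 + d^2) - ((a - c)^2 + (b - d)^2))^2"
  by (simp add: power2_eq_square algebra_simps)

lemma equilateral_triangle_cross_product:
  fixes a1 a2 b1 b2 c1 c2 :: "'a::comm_ring_1"
  assumes "equilateral_triangle (a1, a2) (b1, b2) (c1, c2) l"
  shows "(2 * ((b1 - a1) * (c2 - a2) - (b2 - a2) * (c1 - a1)))^2 = 3 * l^2"
proof -
  have u: "(b1 - a1)^2 + (b2 - a2)^2 = l" and v: "(c1 - a1)^2 + (c2 - a2)^2 = l"
    and w: "((b1 - a1) - (c1 - a1))^2 + ((b2 - a2) - (c2 - a2))^2 = l"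
    using assms by (simp_all add: equilateral_triangle_def qdist_def power2_commute)
  have "(2 * ((b1 - a1) * (c2 - a2) - (b2 - a2) * (c1 - a1)))^2 = 4 * l * l - (l + l - l)^2"
    using cross_product_square_identity[where a = "b1 - a1" and b = "b2 - a2"
        and c = "c1 - a1" and d = "c2 - a2"]
    unfolding u v w .
  then show ?thesis
    by (simp add: power2_eq_square algebra_simps)
qed

lemma equilateral_triangle_exists_iff_square_three:
  assumes "(2::'a::field) \<noteq> 0"
  shows "(\<exists>(x1::'a \<times> 'a) x2 x3 l. l \<noteq> 0 \<and> equilateral_triangle x1 x2 x3 l) \<longleftrightarrow>
    (\<exists>s::'a. s^2 = 3)"
proof
  assume "\<exists>(x1::'a \<times> 'a) x2 x3 l. l \<noteq> 0 \<and> equilateral_triangle x1 x2 x3 l"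
  then obtain a1 a2 b1 b2 c1 c2 l :: 'a
    where "l \<noteq> 0" and "equilateral_triangle (a1, a2) (b1, b2) (c1, c2) l"
    by auto
  define d where "d = (b1 - a1) * (c2 - a2) - (b2 - a2) * (c1 - a1)"
  have "(2 * d)^2 = 3 * l^2"
    unfolding d_def by (rule equilateral_triangle_cross_product) fact
  with \<open>l \<noteq> 0\<close> have "(2 * d / l)^2 = 3"
    by (simp add: power_divide)
  then show "\<exists>s::'a. s^2 = 3" by blast
next
  assume "\<exists>s::'a. s^2 = 3"
  then obtain s :: 'a where s: "s^2 = 3" by blast
  have "(4::'a) \<noteq> 0"
    using assms by (metis mult_2 mult_eq_0_iff numeral_Bit0)
  then have "equilateral_triangle (0, 0) (1, 0) (1/2, s/2) 1"
    using assms s by (simp add: equilateral_triangle_def qdist_def field_simps power2_eq_square)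
  then show "\<exists>(x1::'a \<times> 'a) x2 x3 l. l \<noteq> 0 \<and> equilateral_triangle x1 x2 x3 l"
    using one_neq_zero by blast
qed

lemma card_power_eq_le:
  fixes c :: "'a::idom"
  assumes "n > 0"
  shows "card {x. x ^ n = c} \<le> n"
proof -
  define P where "P = monom 1 n + [:-c:]"
  have "degree P = n"
    using assms unfolding P_def by (subst degree_add_eq_left) (auto simp: degree_monom_eq)
  with assms have "P \<noteq> 0" by auto
  moreover have "{x. poly P x = 0} = {x. x ^ n = c}"
    unfolding P_def by (simp add: poly_monom)
  ultimately show ?thesis
    using card_poly_roots_bound \<open>degree P = n\<close> by metis
qed

lemma finite_field_power_card_minus_one:
  fixes x :: "'a::{field,finite}"
  assumes "x \<noteq> 0"
  shows "x ^ (card (UNIV :: 'a set) - 1) = 1"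
proof -
  have "x ^ (card (UNIV :: 'a set) - 1) * (\<Prod>y\<in>UNIV-{0}. y) = (\<Prod>y\<in>UNIV-{0}. x * y)"
    by (simp add: prod.distrib card_Diff_singleton)
  also have "\<dots> = 1 * (\<Prod>y\<in>UNIV-{0}. y)"
    by (simp, rule prod.reindex_bij_witness[of _ "\<lambda>y. y / x" "\<lambda>y. x * y"]) (use assms in auto)
  finally show ?thesis
    by (subst (asm) mult_cancel_right) simp
qed

lemma card_nonzero_le_twice_card_squares:
  "card (UNIV :: 'a::{idom,finite} set) - 1 \<le> 2 * card ((\<lambda>y. y^2) ` (UNIV - {0::'a}))"
proof -
  let ?S = "(\<lambda>y. y^2) ` (UNIV - {0::'a})"
  have "card (UNIV :: 'a set) - 1 = card (UNIV - {0::'a})"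
    by (simp add: card_Diff_singleton)
  also have "\<dots> \<le> card (\<Union>z\<in>?S. {y. y^2 = z})"
    by (rule card_mono) auto
  also have "\<dots> \<le> (\<Sum>z\<in>?S. card {y. y^2 = z})"
    by (rule card_UN_le) simp
  also have "\<dots> \<le> (\<Sum>z\<in>?S. 2)"
    by (rule sum_mono) (simp add: card_power_eq_le)
  finally show ?thesis
    by (simp add: mult.commute)
qed

lemma finite_field_square_iff_power_half_card:
  fixes x :: "'a::{field,finite}"
  assumes "odd (card (UNIV :: 'a set))" and "x \<noteq> 0"
  shows "(\<exists>s. s^2 = x) \<longleftrightarrow> x ^ ((card (UNIV :: 'a set) - 1) div 2) = 1"
proof -
  define h where "h = (card (UNIV :: 'a set) - 1) div 2"
  have card_eq: "card (UNIV :: 'a set) - 1 = 2 * h"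
    using assms(1) unfolding h_def by simp
  have "h > 0"
  proof -
    have "card {0::'a, 1} \<le> card (UNIV :: 'a set)" by (rule card_mono) auto
    with card_eq show ?thesis by simp
  qed
  have squares_roots: "(\<lambda>y. y^2) ` (UNIV - {0::'a}) \<subseteq> {z. z ^ h = 1}"
  proof safe
    fix y :: 'a
    assume "y \<noteq> 0"
    then show "(y^2) ^ h = 1"
      using finite_field_power_card_minus_one[of y] unfolding card_eq by (simp add: power_mult)
  qed
  show ?thesis
  proof
    assume "\<exists>s. s^2 = x"
    with assms(2) squares_roots show "x ^ ((card (UNIV :: 'a set) - 1) div 2) = 1"
      unfolding h_def by force
  next
    assume "x ^ ((card (UNIV :: 'a set) - 1) div 2) = 1"
    show "\<exists>s. s^2 = x"
    proof (rule ccontr)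
      assume "\<nexists>s. s^2 = x"
      then have "x \<notin> (\<lambda>y. y^2) ` (UNIV - {0})" by auto
      then have "card ((\<lambda>y. y^2) ` (UNIV - {0::'a})) < card {z::'a. z ^ h = 1}"
        using squares_roots \<open>x ^ ((card (UNIV :: 'a set) - 1) div 2) = 1\<close> unfolding h_def
        by (intro psubset_card_mono) auto
      also have "\<dots> \<le> h"
        using \<open>h > 0\<close> by (rule card_power_eq_le)
      finally show False
        using card_nonzero_le_twice_card_squares[where 'a = 'a] card_eq by simp
    qed
  qed
qed

lemma power_minus_one_eq_mult_sum_nat: "(p::nat) ^ n - 1 = (p - 1) * (\<Sum>i<n. p ^ i)"
proof (cases "p = 0")
  case False
  then have "int (p ^ n - 1) = int ((p - 1) * (\<Sum>i<n. p ^ i))"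
    using power_diff_1_eq[of "int p" n] by (simp add: of_nat_diff)
  then show ?thesis
    by (simp only: of_nat_eq_iff)
qed (cases n; simp)

lemma even_sum_powers_iff: "odd (p::nat) \<Longrightarrow> even (\<Sum>i<n. p ^ i) \<longleftrightarrow> even n"
  by (induction n) simp_all

lemma Legendre_mod: "Legendre (a mod m) m = Legendre a m"
  unfolding Legendre_def QuadRes_def cong_def by simp

lemma Legendre_one_three: "Legendre 1 3 = 1"
  unfolding Legendre_def QuadRes_def cong_def by (auto intro: exI[of _ 1])

lemma Legendre_two_three: "Legendre 2 3 = -1"
proof -
  have "\<not> [y^2 = 2] (mod 3)" for y :: int
  proof
    assume "[y^2 = 2] (mod 3)"
    then have "(y mod 3)^2 mod 3 = 2"
      by (simp add: cong_def power_mod)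
    moreover have "y mod 3 = 0 \<or> y mod 3 = 1 \<or> y mod 3 = 2" by presburger
    ultimately show False by (auto simp: power2_eq_square)
  qed
  then show ?thesis
    unfolding Legendre_def QuadRes_def cong_def by auto
qed

lemma Legendre_three:
  fixes p :: nat
  assumes "prime p" and "p > 3"
  shows "Legendre 3 p = (if p mod 12 \<in> {1, 11} then 1 else -1)"
proof -
  have "\<not> 3 dvd p"
    using primes_dvd_imp_eq[of 3 p] assms by auto
  then have mod3: "p mod 3 = 1 \<or> p mod 3 = 2"
    by presburger
  have "odd p"
    using assms prime_odd_nat by auto
  then have mod4: "p mod 4 = 1 \<or> p mod 4 = 3"
    by presburger
  have "Legendre p 3 = Legendre (int (p mod 3)) 3"
    by (simp add: Legendre_mod zmod_int)
  then have L_p_3: "Legendre p 3 = (if p mod 3 = 1 then 1 else -1)"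
    using mod3 by (auto simp: Legendre_one_three Legendre_two_three)
  have "(-1::int) ^ ((p - 1) div 2) = (if p mod 4 = 1 then 1 else -1)"
    using mod4 by (auto simp: minus_one_power_iff; presburger)
  with L_p_3 have "Legendre 3 p = (if p mod 3 = 1 \<longleftrightarrow> p mod 4 = 1 then 1 else -1)"
    using Quadratic_Reciprocity[of p 3] assms by (auto split: if_splits)
  moreover have "p mod 12 \<in> {1, 11} \<longleftrightarrow> (p mod 3 = 1 \<longleftrightarrow> p mod 4 = 1)"
    using mod3 mod4 by simp presburger
  ultimately show ?thesis
    by simp
qed

lemma of_int_Legendre_eq_power:
  fixes p :: nat
  assumes "prime p" and "p > 2" and "CHAR('a::ring_1) = p"
  shows "(of_int (Legendre a p) :: 'a) = of_int a ^ ((p - 1) div 2)"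
proof -
  have "[Legendre a p = a ^ ((p - 1) div 2)] (mod int CHAR('a))"
    using euler_criterion[OF assms(1,2)] assms(3) by simp
  then have "(of_int (Legendre a p) :: 'a) = of_int (a ^ ((p - 1) div 2))"
    by (simp only: of_int_eq_iff_cong_CHAR)
  then show ?thesis
    by simp
qed

lemma power_half_card_eq_Legendre_power:
  fixes p n :: nat and a :: int
  assumes "card (UNIV :: 'a::{field,finite} set) = p ^ n"
    and "CHAR('a) = p" and "prime p" and "odd p"
  shows "(of_int a :: 'a) ^ ((card (UNIV :: 'a set) - 1) div 2)
    = of_int (Legendre a p) ^ (\<Sum>i<n. p ^ i)"
proof -
  have "p > 2"
    using assms(3,4) prime_ge_2_nat[of p] by (auto simp: order_le_less)
  obtain b where "p = 2 * b + 1"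
    using assms(4) by (rule oddE)
  moreover have "card (UNIV :: 'a set) - 1 = (p - 1) * (\<Sum>i<n. p ^ i)"
    using assms(1) power_minus_one_eq_mult_sum_nat[of p n] by simp
  ultimately have "(card (UNIV :: 'a set) - 1) div 2 = (p - 1) div 2 * (\<Sum>i<n. p ^ i)"
    by simp
  then show ?thesis
    by (simp add: of_int_Legendre_eq_power[OF assms(3) \<open>p > 2\<close> assms(2)] power_mult)
qed

lemma finite_field_square_three_iff:
  fixes p n :: nat
  assumes "card (UNIV :: 'a::{field,finite} set) = p ^ n"
    and "CHAR('a) = p" and "prime p" and "odd p"
  shows "(\<exists>s::'a. s^2 = 3) \<longleftrightarrow> p = 3 \<or> even n \<or> p mod 12 \<in> {1, 11}"
proof -
  have "p > 2"
    using assms(3,4) prime_ge_2_nat[of p] by (auto simp: order_le_less)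
  have char_dvd: "(of_nat m :: 'a) = 0 \<longleftrightarrow> p dvd m" for m
    using of_nat_eq_0_iff_char_dvd assms(2) by metis
  show ?thesis
  proof (cases "p = 3")
    case True
    then have "(3::'a) = 0"
      using char_dvd[of 3] by simp
    with True show ?thesis
      by (auto intro: exI[of _ 0])
  next
    case False
    with \<open>p > 2\<close> have "p > 3" by simp
    then have "(2::'a) \<noteq> 0" and "(3::'a) \<noteq> 0"
      using char_dvd[of 2] char_dvd[of 3] by (auto dest: dvd_imp_le)
    define L where "L = Legendre 3 p"
    have L: "L = (if p mod 12 \<in> {1, 11} then 1 else -1)"
      unfolding L_def using Legendre_three[OF assms(3) \<open>p > 3\<close>] .
    have "odd (card (UNIV :: 'a set))"
      using assms(1,4) by simp
    then have "(\<exists>s::'a. s^2 = 3) \<longleftrightarrow> (3::'a) ^ ((card (UNIV :: 'a set) - 1) div 2) = 1"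
      using \<open>(3::'a) \<noteq> 0\<close> by (rule finite_field_square_iff_power_half_card)
    also have "\<dots> \<longleftrightarrow> (of_int L :: 'a) ^ (\<Sum>i<n. p ^ i) = 1"
      using power_half_card_eq_Legendre_power[OF assms, of 3] by (simp add: L_def)
    also have "\<dots> \<longleftrightarrow> L = 1 \<or> even n"
      using L \<open>(2::'a) \<noteq> 0\<close> even_sum_powers_iff[OF assms(4)]
      by (auto simp: minus_one_power_iff)
    finally show ?thesis
      using L False by auto
  qed
qed

theorem corollary4p2:
  fixes p n :: nat
  assumes "card (UNIV :: 'a::{field,finite} set) = p ^ n"
    and "CHAR('a) = p" and "prime p" and "odd p"
  shows "(even n \<longrightarrow>
            (\<exists>(x1::'a::{field,finite} \<times> 'a) x2 x3 l. l \<noteq> 0 \<and> equilateral_triangle x1 x2 x3 l))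
       \<and> (odd n \<longrightarrow>
            ((\<exists>(x1::'a::{field,finite} \<times> 'a) x2 x3 l. l \<noteq> 0 \<and> equilateral_triangle x1 x2 x3 l)
             \<longleftrightarrow> p mod 12 \<in> {1, 3, 11}))"
proof -
  have "(2::'a) \<noteq> 0"
    using of_nat_eq_0_iff_char_dvd[of 2, where 'a = 'a] assms(2,4) prime_ge_2_nat[OF assms(3)]
    by (auto dest: dvd_imp_le)
  have "(\<exists>(x1::'a \<times> 'a) x2 x3 l. l \<noteq> 0 \<and> equilateral_triangle x1 x2 x3 l)
      \<longleftrightarrow> p = 3 \<or> even n \<or> p mod 12 \<in> {1, 11}"
    unfolding equilateral_triangle_exists_iff_square_three[OF \<open>(2::'a) \<noteq> 0\<close>]
    by (rule finite_field_square_three_iff[OF assms])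
  moreover have "p mod 12 = 3 \<longleftrightarrow> p = 3"
    using primes_dvd_imp_eq[of 3 p] assms(3) by auto presburger
  ultimately show ?thesis
    by auto
qed

end
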